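(* Let $c>0$, $n\ge 2$, and let $\mathbb{R}^n_c=\{\mathbf{v}\in\mathbb{R}^n:\|\mathbf{v}\|<c\}$ be equipped with Möbius addition $\oplus$, Möbius scalar multiplication $\otimes$ and Möbius coaddition $\boxplus$ (defined in the context). Let $C,D\in\mathbb{R}^n_c$ be distinct and let $L_{CD}(t)=C\oplus\big((\ominus C\oplus D)\otimes t\big)$, $t\in\mathbb{R}$, be the Möbius gyroline through $C$ and $D$. Then the supporting chord of this gyroline is the set $\{C\boxplus L_{CD}(t):t\in\mathbb{R}\}$. Furthermore, this supporting chord passes through the points $$P_1=C\boxplus C=2\otimes C,\qquad P_2=D\boxplus D=2\otimes D,\qquad P_3=C\boxplus D.$$
   Context: Möbius addition in the ball $\mathbb{R}^n_c$ is $$\mathbf{u}\oplus\mathbf{v}=\frac{\big(1+\frac{2}{c^2}\mathbf{u}\cdot\mathbf{v}+\frac{1}{c^2}\|\mathbf{v}\|^2\big)\mathbf{u}+\big(1-\frac{1}{c^2}\|\mathbf{u}\|^2\big)\mathbf{v}}{1+\frac{2}{c^2}\mathbf{u}\cdot\mathbf{v}+\frac{1}{c^4}\|\mathbf{u}\|^2\|\mathbf{v}\|^2},$$ with $\ominus\mathbf{v}=-\mathbf{v}$. Scalar multiplication: for $r\in\mathbb{R}$ and $\mathbf{v}\neq\mathbf{0}$, $r\otimes\mathbf{v}=\mathbf{v}\otimes r=c\tanh\!\big(r\tanh^{-1}(\|\mathbf{v}\|/c)\big)\frac{\mathbf{v}}{\|\mathbf{v}\|}$, and $r\otimes\mathbf{0}=\mathbf{0}$.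 The gyration generated by $\mathbf{u},\mathbf{v}$ is $\mathrm{gyr}[\mathbf{u},\mathbf{v}]\mathbf{w}=\ominus(\mathbf{u}\oplus\mathbf{v})\oplus\big(\mathbf{u}\oplus(\mathbf{v}\oplus\mathbf{w})\big)$, and Möbius coaddition is $\mathbf{a}\boxplus\mathbf{b}=\mathbf{a}\oplus\mathrm{gyr}[\mathbf{a},\ominus\mathbf{b}]\mathbf{b}$. A Möbius gyroline $L_{CD}$ is (the intersection with the ball of) a Euclidean circular arc or diameter meeting the boundary sphere $\|\mathbf{x}\|=c$ at two endpoints $\lim_{t\to\pm\infty}L_{CD}(t)$; its supporting chord is the set of points of the open ball $\mathbb{R}^n_c$ lying on the Euclidean straight line through these two endpoints. *)

theory Defs
  imports "HOL-Analysis.Analysis"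
begin

definition mobius_add :: "real \<Rightarrow> real^'n \<Rightarrow> real^'n \<Rightarrow> real^'n" where
  "mobius_add c u v =
     (1 / (1 + (2 / c^2) * (u \<bullet> v) + (1 / c^4) * (norm u)^2 * (norm v)^2)) *\<^sub>R
     ((1 + (2 / c^2) * (u \<bullet> v) + (1 / c^2) * (norm v)^2) *\<^sub>R u
      + (1 - (1 / c^2) * (norm u)^2) *\<^sub>R v)"

definition mobius_neg :: "real^'n \<Rightarrow> real^'n" where
  "mobius_neg v = - v"

definition mobius_smult :: "real \<Rightarrow> real \<Rightarrow> real^'n \<Rightarrow> real^'n" where
  "mobius_smult c r v =
     (if v = 0 then 0
      else (c * tanh (r * artanh (norm v / c))) *\<^sub>R ((1 / norm v) *\<^sub>R v))"

definition mobius_gyr :: "real \<Rightarrow> real^'n \<Rightarrow> real^'n \<Rightarrow> real^'n \<Rightarrow> real^'n" where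
  "mobius_gyr c u v w =
     mobius_add c (mobius_neg (mobius_add c u v)) (mobius_add c u (mobius_add c v w))"

definition mobius_coadd :: "real \<Rightarrow> real^'n \<Rightarrow> real^'n \<Rightarrow> real^'n" where
  "mobius_coadd c a b = mobius_add c a (mobius_gyr c a (mobius_neg b) b)"

definition gyroline :: "real \<Rightarrow> real^'n \<Rightarrow> real^'n \<Rightarrow> real \<Rightarrow> real^'n" where
  "gyroline c C D t = mobius_add c C (mobius_smult c t (mobius_add c (mobius_neg C) D))"

definition supporting_chord :: "real \<Rightarrow> real^'n \<Rightarrow> real^'n \<Rightarrow> (real^'n) set" where
  "supporting_chord c E1 E2 = {x. norm x < c \<and> x \<in> affine hull {E1, E2}}"

end

theory Submission
  imports Defs
begin

text \<open>Writing the points involved as combinations of two fixed vectors reduces every Moebius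
  operation to identities between rational functions of their inner products. In these terms
  coaddition is the weighted mean
  \<open>a \<boxplus> b = ((1 - \<parallel>b\<parallel>\<^sup>2/c\<^sup>2) a + (1 - \<parallel>a\<parallel>\<^sup>2/c\<^sup>2) b) / (1 - \<parallel>a\<parallel>\<^sup>2\<parallel>b\<parallel>\<^sup>2/c\<^sup>4)\<close>,
  and \<open>x \<mapsto> C \<boxplus> (C \<oplus> x)\<close> is a linear-fractional map of \<open>x\<close> that agrees with
  \<open>x \<mapsto> C \<oplus> x\<close> on the boundary sphere. The gyroline is \<open>L(t) = C \<oplus> tanh(K t) e\<close>
  with \<open>\<parallel>e\<parallel> = c\<close>, so \<open>C \<boxplus> L(t)\<close> runs through the image of the open diameter
  \<open>(-e, e)\<close> under that map, which is the open segment between the endpoints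
  \<open>C \<oplus> (\<plusminus>e)\<close> of the gyroline. The three points are \<open>C \<boxplus> L(t)\<close> for \<open>t = 0, 2, 1\<close>;
  for \<open>t = 2\<close> this is the identity \<open>D \<boxplus> D = C \<boxplus> (C \<oplus> 2 \<otimes> (\<ominus>C \<oplus> D))\<close>.\<close>

section \<open>Coordinates for Moebius addition\<close>

definition ball_inner :: "real \<Rightarrow> 'a::real_inner \<Rightarrow> 'a \<Rightarrow> real" where
  "ball_inner c u v = (u \<bullet> v) / c^2"

definition mobius_denom :: "real \<Rightarrow> 'a::real_inner \<Rightarrow> 'a \<Rightarrow> real" where
  "mobius_denom c u v = 1 + 2 * ball_inner c u v + ball_inner c u u * ball_inner c v v"

lemma ball_inner_scaleR [simp]:
  "ball_inner c (\<alpha> *\<^sub>R a) b = \<alpha> * ball_inner c a b" "ball_inner c a (\<alpha> *\<^sub>R b) = \<alpha> * ball_inner c a b"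
  "ball_inner c (-a) b = - ball_inner c a b" "ball_inner c a (-b) = - ball_inner c a b"
  "ball_inner c 0 b = 0" "ball_inner c a 0 = 0"
  by (simp_all add: ball_inner_def)

lemma ball_inner_combination:
  "ball_inner c (\<alpha> *\<^sub>R a + \<beta> *\<^sub>R b) (\<gamma> *\<^sub>R a + \<delta> *\<^sub>R b)
     = \<alpha>*\<gamma> * ball_inner c a a + (\<alpha>*\<delta> + \<beta>*\<gamma>) * ball_inner c a b + \<beta>*\<delta> * ball_inner c b b"
  by (simp add: ball_inner_def inner_add_left inner_add_right inner_commute[of b a]
      add_divide_distrib algebra_simps)

lemma ball_inner_combination_left:
  "ball_inner c (\<alpha> *\<^sub>R a + \<beta> *\<^sub>R b) a = \<alpha> * ball_inner c a a + \<beta> * ball_inner c a b"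
  by (simp add: ball_inner_def inner_add_left inner_commute[of b a] add_divide_distrib)

lemma ball_inner_combination_right:
  "ball_inner c a (\<alpha> *\<^sub>R a + \<beta> *\<^sub>R b) = \<alpha> * ball_inner c a a + \<beta> * ball_inner c a b"
  by (simp add: ball_inner_def inner_add_right add_divide_distrib)

lemma ball_inner_combination_self:
  "ball_inner c (\<alpha> *\<^sub>R a + \<beta> *\<^sub>R b) (\<alpha> *\<^sub>R a + \<beta> *\<^sub>R b)
     = \<alpha>^2 * ball_inner c a a + 2*\<alpha>*\<beta> * ball_inner c a b + \<beta>^2 * ball_inner c b b"
  unfolding ball_inner_combination by algebra

lemma ball_inner_self: "ball_inner c u u = (norm u / c)^2"
  by (simp add: ball_inner_def power2_norm_eq_inner power_divide)

lemma ball_inner_self_nonneg: "ball_inner c u u \<ge> 0"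
  by (simp add: ball_inner_def)

lemma ball_inner_self_less_1_iff:
  assumes "c > 0"
  shows "ball_inner c u u < 1 \<longleftrightarrow> norm u < c"
proof -
  have "ball_inner c u u < 1 \<longleftrightarrow> \<bar>norm u / c\<bar> < 1"
    unfolding ball_inner_self by (rule abs_square_less_1)
  also have "\<dots> \<longleftrightarrow> norm u < c"
    using assms by (simp add: abs_div divide_less_eq)
  finally show ?thesis .
qed

lemma ball_inner_self_less_1:
  "c > 0 \<Longrightarrow> norm u < c \<Longrightarrow> ball_inner c u u < 1"
  by (simp add: ball_inner_self_less_1_iff)

lemma ball_inner_ge_neg_norms:
  assumes "c > 0"
  shows "ball_inner c u v \<ge> - (norm u * norm v) / c^2"
proof -
  have "u \<bullet> v \<ge> - (norm u * norm v)"
    using Cauchy_Schwarz_ineq2[of u v] by linarith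
  then show ?thesis
    unfolding ball_inner_def
    using assms divide_right_mono[of "- (norm u * norm v)" "u \<bullet> v" "c^2"] by simp
qed

lemma mobius_denom_pos:
  assumes c: "c > 0" and u: "norm u < c" and v: "norm v \<le> c"
  shows "mobius_denom c u v > 0"
proof -
  define x where "x = norm u * norm v / c^2"
  have "norm u * norm v \<le> norm u * c"
    using v by (simp add: mult_left_mono)
  also have "\<dots> < c^2"
    using c u by (simp add: power2_eq_square mult_strict_right_mono)
  finally have x1: "x < 1"
    using c by (simp add: x_def divide_less_eq)
  have "ball_inner c u u * ball_inner c v v = x^2"
    by (simp add: ball_inner_self x_def power_mult_distrib power_divide)
  moreover have "(1 - x)^2 > 0"
    using x1 by simp
  ultimately show ?thesis
    unfolding mobius_denom_def using ball_inner_ge_neg_norms[OF c, of u v]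
    by (simp add: x_def power2_eq_square algebra_simps)
qed

lemma mobius_add_eq:
  assumes "c \<noteq> 0"
  shows "mobius_add c u v =
    ((1 + 2 * ball_inner c u v + ball_inner c v v) / mobius_denom c u v) *\<^sub>R u
    + ((1 - ball_inner c u u) / mobius_denom c u v) *\<^sub>R v"
  unfolding mobius_add_def mobius_denom_def ball_inner_def power2_norm_eq_inner
  using assms by (simp add: scaleR_add_right power4_eq_xxxx power2_eq_square mult.assoc)

lemma mobius_add_zero_right [simp]: "mobius_add c a 0 = a"
  by (simp add: mobius_add_def)

lemma mobius_add_neg_self:
  assumes "c \<noteq> 0"
  shows "mobius_add c (-b) b = 0"
proof -
  have "1 + 2 * ball_inner c (-b) b + ball_inner c b b = 1 - ball_inner c (-b) (-b)"
    by simp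
  then show ?thesis
    unfolding mobius_add_eq[OF assms] by simp
qed

lemma ball_inner_mobius_add:
  assumes c: "c \<noteq> 0" and d: "mobius_denom c u v \<noteq> 0"
  shows "ball_inner c (mobius_add c u v) (mobius_add c u v)
    = 1 - (1 - ball_inner c u u) * (1 - ball_inner c v v) / mobius_denom c u v"
proof -
  define U V W d where "U = ball_inner c u u" and "V = ball_inner c v v"
    and "W = ball_inner c u v" and "d = mobius_denom c u v"
  have dd: "d = 1 + 2*W + U*V"
    by (simp add: d_def U_def V_def W_def mobius_denom_def)
  have "((1 + 2*W + V) / d)^2 * U + 2 * ((1 + 2*W + V) / d) * ((1 - U) / d) * W
      + ((1 - U) / d)^2 * V = 1 - (1 - U) * (1 - V) / d"
    using d unfolding d_def[symmetric] by (simp add: field_simps power2_eq_square; use dd in algebra)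
  then show ?thesis
    unfolding mobius_add_eq[OF c] ball_inner_combination_self
    by (simp add: U_def V_def W_def d_def)
qed

lemma norm_mobius_add_less:
  assumes c: "c > 0" and u: "norm u < c" and v: "norm v < c"
  shows "norm (mobius_add c u v) < c"
proof -
  have d: "mobius_denom c u v > 0"
    using mobius_denom_pos[OF c u] v by simp
  then have "(1 - ball_inner c u u) * (1 - ball_inner c v v) / mobius_denom c u v > 0"
    using u v by (simp add: ball_inner_self_less_1_iff[OF c])
  then have "ball_inner c (mobius_add c u v) (mobius_add c u v) < 1"
    using ball_inner_mobius_add[of c u v] c d by simp
  then show ?thesis
    using ball_inner_self_less_1_iff[OF c] by blast
qed

lemma scaleR_combination_collect:
  fixes a b :: "'a::real_vector"
  shows "s *\<^sub>R (\<alpha> *\<^sub>R a + \<beta> *\<^sub>R b) + t *\<^sub>R a = (s*\<alpha> + t) *\<^sub>R a + (s*\<beta>) *\<^sub>R b"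
    and "s *\<^sub>R a + t *\<^sub>R (\<alpha> *\<^sub>R a + \<beta> *\<^sub>R b) = (s + t*\<alpha>) *\<^sub>R a + (t*\<beta>) *\<^sub>R b"
    and "s *\<^sub>R (-(\<alpha> *\<^sub>R a + \<beta> *\<^sub>R b)) + t *\<^sub>R a = (-s*\<alpha> + t) *\<^sub>R a + (-s*\<beta>) *\<^sub>R b"
  by (simp_all add: algebra_simps)

section \<open>Left cancellation and the coaddition formula\<close>

text \<open>In the coefficient identities below \<open>A\<close>, \<open>B\<close>, \<open>P\<close> (or \<open>X\<close>, \<open>Q\<close>, \<open>V\<close>) play the
  role of the scaled inner products \<open>ball_inner c\<close> of two fixed vectors and \<open>d\<close> that of their
  Moebius denominator.\<close>

lemma left_cancel_coeffs:
  fixes A B P d \<alpha> \<beta> s t :: real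
  assumes dd: "d = 1 + 2*(-P) + A*B" and dnz: "d \<noteq> 0" and A1: "1 - A \<noteq> 0"
    and al: "\<alpha> = -((1 + 2*(-P) + B)/d)" and be: "\<beta> = (1-A)/d"
    and s: "s = (1 + 2*(\<alpha>*A+\<beta>*P) + (\<alpha>^2*A+2*\<alpha>*\<beta>*P+\<beta>^2*B))
              / (1 + 2*(\<alpha>*A+\<beta>*P) + A*(\<alpha>^2*A+2*\<alpha>*\<beta>*P+\<beta>^2*B))"
    and t: "t = (1 - A)/(1 + 2*(\<alpha>*A+\<beta>*P) + A*(\<alpha>^2*A+2*\<alpha>*\<beta>*P+\<beta>^2*B))"
  shows "s + t*\<alpha> = 0" "t*\<beta> = 1"
proof -
  define e where "e = 1 - A"
  have en: "e \<noteq> 0" using A1 e_def by simp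
  have n1: "1 + 2*(\<alpha>*A+\<beta>*P) + A*(\<alpha>^2*A+2*\<alpha>*\<beta>*P+\<beta>^2*B) = e^2/d"
    using dnz by (simp add: al be e_def field_simps power2_eq_square; use dd in algebra)
  have n2: "1 + 2*(\<alpha>*A+\<beta>*P) + (\<alpha>^2*A+2*\<alpha>*\<beta>*P+\<beta>^2*B) = e*(1-2*P+B)/d"
    using dnz by (simp add: al be e_def field_simps power2_eq_square; use dd in algebra)
  show "s + t*\<alpha> = 0"
    unfolding s t n1 n2 unfolding al e_def[symmetric] using dnz en
    by (simp add: field_simps power2_eq_square; use dd in algebra)
  show "t*\<beta> = 1"
    unfolding t n1 unfolding be e_def[symmetric] using dnz en by (simp add: field_simps power2_eq_square)
qed

lemma mobius_left_cancel:
  assumes c: "c > 0" and C: "norm C < c" and D: "norm D < c"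
  shows "mobius_add c C (mobius_add c (-C) D) = D"
proof -
  have c0: "c \<noteq> 0" using c by simp
  define A B P where "A = ball_inner c C C" and "B = ball_inner c D D" and "P = ball_inner c C D"
  define d where "d = mobius_denom c (-C) D"
  have dd: "d = 1 + 2*(-P) + A*B"
    unfolding d_def mobius_denom_def A_def B_def P_def by simp
  have d0: "d \<noteq> 0"
    unfolding d_def using mobius_denom_pos[OF c, of "-C" D] C D by simp
  have A1: "1 - A \<noteq> 0"
    using ball_inner_self_less_1[OF c C] by (simp add: A_def)
  define \<alpha> \<beta> where "\<alpha> = -((1 + 2*(-P) + B)/d)" and "\<beta> = (1-A)/d"
  define w where "w = mobius_add c (-C) D"
  have w: "w = \<alpha> *\<^sub>R C + \<beta> *\<^sub>R D"
    by (simp add: w_def mobius_add_eq[OF c0] d_def[symmetric] \<alpha>_def \<beta>_def A_def B_def P_def)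
  define s t where "s = (1 + 2 * ball_inner c C w + ball_inner c w w) / mobius_denom c C w"
    and "t = (1 - ball_inner c C C) / mobius_denom c C w"
  have Cw: "ball_inner c C w = \<alpha>*A + \<beta>*P"
    unfolding w ball_inner_combination_right A_def P_def ..
  have ww: "ball_inner c w w = \<alpha>^2*A + 2*\<alpha>*\<beta>*P + \<beta>^2*B"
    unfolding w ball_inner_combination_self A_def P_def B_def ..
  have dw: "mobius_denom c C w = 1 + 2*(\<alpha>*A+\<beta>*P) + A*(\<alpha>^2*A+2*\<alpha>*\<beta>*P+\<beta>^2*B)"
    unfolding mobius_denom_def Cw ww A_def ..
  have "s + t*\<alpha> = 0" "t*\<beta> = 1"
    by (rule left_cancel_coeffs[OF dd d0 A1 \<alpha>_def \<beta>_def]; simp add: s_def t_def Cw ww dw A_def)+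
  moreover have "mobius_add c C w = (s + t*\<alpha>) *\<^sub>R C + (t*\<beta>) *\<^sub>R D"
    unfolding mobius_add_eq[OF c0] s_def[symmetric] t_def[symmetric]
    unfolding w scaleR_combination_collect ..
  ultimately show ?thesis
    by (simp add: w_def)
qed

lemma gyr_neg_coeffs:
  fixes A B P d \<alpha> \<beta> s t :: real
  assumes dd: "d = 1 - 2*P + A*B" and dnz: "d \<noteq> 0" and A1: "1 - A \<noteq> 0"
    and al: "\<alpha> = (1 - 2*P + B)/d" and be: "\<beta> = -(1 - A)/d"
    and s: "s = (1 + 2*(-(\<alpha>*A+\<beta>*P)) + A)
              / (1 + 2*(-(\<alpha>*A+\<beta>*P)) + (\<alpha>^2*A+2*\<alpha>*\<beta>*P+\<beta>^2*B)*A)"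
    and t: "t = (1 - (\<alpha>^2*A+2*\<alpha>*\<beta>*P+\<beta>^2*B))
              / (1 + 2*(-(\<alpha>*A+\<beta>*P)) + (\<alpha>^2*A+2*\<alpha>*\<beta>*P+\<beta>^2*B)*A)"
  shows "- s*\<alpha> + t = -2*B*(1-P)/d" "- s*\<beta> = (1-A*B)/d"
proof -
  define e where "e = 1 - A"
  have en: "e \<noteq> 0" using A1 e_def by simp
  have n1: "1 + 2*(-(\<alpha>*A+\<beta>*P)) + A = e*(1-A*B)/d"
    using dnz by (simp add: al be e_def field_simps; use dd in algebra)
  have n2: "1 + 2*(-(\<alpha>*A+\<beta>*P)) + (\<alpha>^2*A+2*\<alpha>*\<beta>*P+\<beta>^2*B)*A = e^2/d"
    using dnz by (simp add: al be e_def field_simps power2_eq_square; use dd in algebra)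
  have n3: "1 - (\<alpha>^2*A+2*\<alpha>*\<beta>*P+\<beta>^2*B) = e*(1-B)/d"
    using dnz by (simp add: al be e_def field_simps power2_eq_square; use dd in algebra)
  have s': "s = (1-A*B)/e"
    unfolding s n1 n2 using dnz en by (simp add: field_simps power2_eq_square)
  have t': "t = (1-B)/e"
    unfolding t n3 n2 using dnz en by (simp add: field_simps power2_eq_square)
  show "- s*\<alpha> + t = -2*B*(1-P)/d"
    unfolding s' t' al using dnz en by (simp add: field_simps; use dd e_def in algebra)
  show "- s*\<beta> = (1-A*B)/d"
    unfolding s' be e_def[symmetric] using dnz en by (simp add: field_simps)
qed

lemma coadd_coeffs:
  fixes A B P d \<gamma> \<delta> s t :: real
  assumes dd: "d = 1 - 2*P + A*B" and dnz: "d \<noteq> 0" and AB: "1 - A*B \<noteq> 0"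
    and ga: "\<gamma> = -2*B*(1-P)/d" and de: "\<delta> = (1-A*B)/d"
    and s: "s = (1 + 2*(\<gamma>*A+\<delta>*P) + (\<gamma>^2*A+2*\<gamma>*\<delta>*P+\<delta>^2*B))
              / (1 + 2*(\<gamma>*A+\<delta>*P) + A*(\<gamma>^2*A+2*\<gamma>*\<delta>*P+\<delta>^2*B))"
    and t: "t = (1 - A)/(1 + 2*(\<gamma>*A+\<delta>*P) + A*(\<gamma>^2*A+2*\<gamma>*\<delta>*P+\<delta>^2*B))"
  shows "s + t*\<gamma> = (1-B)/(1-A*B)" "t*\<delta> = (1-A)/(1-A*B)"
proof -
  define g where "g = 1 - A*B"
  have gn: "g \<noteq> 0" using AB g_def by simp
  have Y: "\<gamma>^2*A+2*\<gamma>*\<delta>*P+\<delta>^2*B = B"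
    using dnz by (simp add: ga de field_simps power2_eq_square; use dd in algebra)
  have n1: "1 + 2*(\<gamma>*A+\<delta>*P) + A*B = g^2/d"
    using dnz by (simp add: ga de g_def field_simps power2_eq_square; use dd in algebra)
  have n2: "1 + 2*(\<gamma>*A+\<delta>*P) + B = (1 + B - 2*P*B - 3*A*B + A*B*B + 2*A*B*P)/d"
    using dnz by (simp add: ga de field_simps power2_eq_square; use dd in algebra)
  show "s + t*\<gamma> = (1-B)/(1-A*B)"
    unfolding s t Y n1 n2 unfolding ga g_def[symmetric] using dnz gn
    by (simp add: field_simps power2_eq_square; use dd g_def in algebra)
  show "t*\<delta> = (1-A)/(1-A*B)"
    unfolding t Y n1 unfolding de g_def[symmetric] using dnz gn
    by (simp add: field_simps power2_eq_square)
qed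

lemma mobius_gyr_neg_eq_add:
  assumes "c \<noteq> 0"
  shows "mobius_gyr c a (-b) b = mobius_add c (-(mobius_add c a (-b))) a"
  unfolding mobius_gyr_def mobius_neg_def by (simp add: mobius_add_neg_self[OF assms])

lemma mobius_gyr_neg_eq:
  assumes c: "c > 0" and a: "norm a < c" and b: "norm b < c"
  defines "d \<equiv> mobius_denom c a (-b)"
  shows "mobius_gyr c a (-b) b
    = (-2 * ball_inner c b b * (1 - ball_inner c a b) / d) *\<^sub>R a
      + ((1 - ball_inner c a a * ball_inner c b b) / d) *\<^sub>R b"
proof -
  have c0: "c \<noteq> 0" using c by simp
  define A B P where "A = ball_inner c a a" and "B = ball_inner c b b" and "P = ball_inner c a b"
  have dd: "d = 1 - 2*P + A*B"
    unfolding d_def mobius_denom_def A_def B_def P_def by simp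
  have d0: "d \<noteq> 0"
    unfolding d_def using mobius_denom_pos[OF c a, of "-b"] b by simp
  have A1: "1 - A \<noteq> 0"
    using ball_inner_self_less_1[OF c a] by (simp add: A_def)
  define \<alpha> \<beta> where "\<alpha> = (1 - 2*P + B)/d" and "\<beta> = -(1-A)/d"
  define w where "w = mobius_add c a (-b)"
  have w: "w = \<alpha> *\<^sub>R a + \<beta> *\<^sub>R b"
    by (simp add: w_def mobius_add_eq[OF c0] d_def[symmetric] \<alpha>_def \<beta>_def A_def B_def P_def
        minus_divide_left flip: scaleR_minus_left)
  define s t where "s = (1 + 2 * ball_inner c (-w) a + ball_inner c a a) / mobius_denom c (-w) a"
    and "t = (1 - ball_inner c (-w) (-w)) / mobius_denom c (-w) a"
  have wa: "ball_inner c w a = \<alpha>*A + \<beta>*P"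
    unfolding w ball_inner_combination_left A_def P_def ..
  have ww: "ball_inner c w w = \<alpha>^2*A + 2*\<alpha>*\<beta>*P + \<beta>^2*B"
    unfolding w ball_inner_combination_self A_def P_def B_def ..
  have dw: "mobius_denom c (-w) a = 1 + 2*(-(\<alpha>*A+\<beta>*P)) + (\<alpha>^2*A+2*\<alpha>*\<beta>*P+\<beta>^2*B)*A"
    by (simp add: mobius_denom_def wa ww A_def)
  have "- s*\<alpha> + t = -2*B*(1-P)/d" "- s*\<beta> = (1-A*B)/d"
    by (rule gyr_neg_coeffs[OF dd d0 A1 \<alpha>_def \<beta>_def]; simp add: s_def t_def wa ww dw A_def)+
  moreover have "mobius_add c (-w) a = (- s*\<alpha> + t) *\<^sub>R a + (- s*\<beta>) *\<^sub>R b"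
    unfolding mobius_add_eq[OF c0] s_def[symmetric] t_def[symmetric]
    unfolding w scaleR_combination_collect ..
  ultimately show ?thesis
    unfolding mobius_gyr_neg_eq_add[OF c0] w_def[symmetric] by (simp add: A_def B_def P_def)
qed

text \<open>Equivalently \<open>a \<boxplus> b = (\<gamma>\<^sub>a\<^sup>2 a + \<gamma>\<^sub>b\<^sup>2 b) / (\<gamma>\<^sub>a\<^sup>2 + \<gamma>\<^sub>b\<^sup>2 - 1)\<close> with the
  gamma factors \<open>\<gamma>\<^sub>x\<^sup>2 = 1 / (1 - \<parallel>x\<parallel>\<^sup>2/c\<^sup>2)\<close>.\<close>

lemma mobius_coadd_eq:
  assumes c: "c > 0" and a: "norm a < c" and b: "norm b < c"
  shows "mobius_coadd c a b
    = ((1 - ball_inner c b b) / (1 - ball_inner c a a * ball_inner c b b)) *\<^sub>R a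
      + ((1 - ball_inner c a a) / (1 - ball_inner c a a * ball_inner c b b)) *\<^sub>R b"
proof -
  have c0: "c \<noteq> 0" using c by simp
  define A B P where "A = ball_inner c a a" and "B = ball_inner c b b" and "P = ball_inner c a b"
  define d where "d = mobius_denom c a (-b)"
  have dd: "d = 1 - 2*P + A*B"
    unfolding d_def mobius_denom_def A_def B_def P_def by simp
  have d0: "d \<noteq> 0"
    unfolding d_def using mobius_denom_pos[OF c a, of "-b"] b by simp
  have "A < 1" "A \<ge> 0" "B < 1" "B \<ge> 0"
    using ball_inner_self_less_1[OF c] a b ball_inner_self_nonneg by (auto simp: A_def B_def)
  then have "A*B \<le> A"
    by (simp add: mult_right_le_one_le)
  then have AB: "1 - A*B \<noteq> 0"
    using \<open>A < 1\<close> by simp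
  define \<gamma> \<delta> where "\<gamma> = -2*B*(1-P)/d" and "\<delta> = (1-A*B)/d"
  define y where "y = mobius_gyr c a (-b) b"
  have y: "y = \<gamma> *\<^sub>R a + \<delta> *\<^sub>R b"
    unfolding y_def mobius_gyr_neg_eq[OF c a b] by (simp add: \<gamma>_def \<delta>_def A_def B_def P_def d_def)
  define s t where "s = (1 + 2 * ball_inner c a y + ball_inner c y y) / mobius_denom c a y"
    and "t = (1 - ball_inner c a a) / mobius_denom c a y"
  have ay: "ball_inner c a y = \<gamma>*A + \<delta>*P"
    unfolding y ball_inner_combination_right A_def P_def ..
  have yy: "ball_inner c y y = \<gamma>^2*A + 2*\<gamma>*\<delta>*P + \<delta>^2*B"
    unfolding y ball_inner_combination_self A_def P_def B_def ..
  have dy: "mobius_denom c a y = 1 + 2*(\<gamma>*A+\<delta>*P) + A*(\<gamma>^2*A+2*\<gamma>*\<delta>*P+\<delta>^2*B)"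
    unfolding mobius_denom_def ay yy A_def ..
  have "s + t*\<gamma> = (1-B)/(1-A*B)" "t*\<delta> = (1-A)/(1-A*B)"
    by (rule coadd_coeffs[OF dd d0 AB \<gamma>_def \<delta>_def]; simp add: s_def t_def ay yy dy A_def)+
  moreover have "mobius_coadd c a b = (s + t*\<gamma>) *\<^sub>R a + (t*\<delta>) *\<^sub>R b"
    unfolding mobius_coadd_def mobius_neg_def y_def[symmetric] mobius_add_eq[OF c0] s_def[symmetric] t_def[symmetric]
    unfolding y scaleR_combination_collect ..
  ultimately show ?thesis
    by (simp add: A_def B_def)
qed

section \<open>Moebius doubling\<close>

lemma tanh_artanh_real:
  fixes x :: real
  assumes "\<bar>x\<bar> < 1"
  shows "tanh (artanh x) = x"
proof -
  have x1: "1 + x > 0" "1 - x > 0"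
    using assms by auto
  have "exp (-2 * artanh x) = inverse ((1+x)/(1-x))"
    using x1 by (simp add: artanh_def exp_minus)
  then have e: "exp (-2 * artanh x) = (1-x)/(1+x)"
    by simp
  show ?thesis
    unfolding tanh_real_altdef e using x1 by (simp add: field_simps)
qed

lemma norm_mobius_smult_less:
  assumes "c > 0"
  shows "norm (mobius_smult c r v) < c"
proof (cases "v = 0")
  case False
  have "\<bar>tanh (r * artanh (norm v / c))\<bar> < 1"
    using tanh_real_bounds by (simp add: abs_less_iff)
  then show ?thesis
    using False assms by (simp add: mobius_smult_def abs_mult)
qed (use assms in \<open>simp add: mobius_smult_def\<close>)

lemma mobius_smult_two:
  assumes c: "c > 0" and a: "norm a < c"
  shows "mobius_smult c 2 a = (2 / (1 + ball_inner c a a)) *\<^sub>R a"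
proof (cases "a = 0")
  case False
  define r where "r = norm a / c"
  have r: "0 < r" "r < 1"
    using False c a by (auto simp: r_def divide_less_eq)
  have "tanh (artanh r) = r"
    using r by (simp add: tanh_artanh_real)
  then have "tanh (2 * artanh r) = 2*r / (1 + r^2)"
    using tanh_add[OF cosh_real_nonzero cosh_real_nonzero, of "artanh r" "artanh r"]
    by (simp add: power2_eq_square)
  then have "mobius_smult c 2 a = (c * (2*r / (1 + r^2)) / norm a) *\<^sub>R a"
    unfolding mobius_smult_def using False by (simp add: r_def)
  also have "c * (2*r / (1 + r^2)) / norm a = 2 / (1 + r^2)"
  proof -
    have "norm a = c * r"
      using c by (simp add: r_def)
    then show ?thesis
      using c r by simp
  qed
  finally show ?thesis
    by (simp add: ball_inner_self r_def)
qed (simp add: mobius_smult_def)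

lemma mobius_coadd_self:
  assumes c: "c > 0" and a: "norm a < c"
  shows "mobius_coadd c a a = mobius_smult c 2 a"
proof -
  define A where "A = ball_inner c a a"
  have "A < 1" "A \<ge> 0"
    using ball_inner_self_less_1[OF c a] ball_inner_self_nonneg by (auto simp: A_def)
  moreover have "A*A \<le> A"
    using \<open>A < 1\<close> \<open>A \<ge> 0\<close> by (simp add: mult_right_le_one_le)
  ultimately have "(1 - A) / (1 - A*A) = 1 / (1 + A)"
    by (simp add: field_simps square_diff_one_factored)
  then have "mobius_coadd c a a = (1 / (1 + A)) *\<^sub>R a + (1 / (1 + A)) *\<^sub>R a"
    using mobius_coadd_eq[OF c a a] unfolding A_def[symmetric] by simp
  also have "\<dots> = (2 / (1 + A)) *\<^sub>R a"
    by (simp add: scaleR_left_distrib[symmetric])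
  finally show ?thesis
    unfolding mobius_smult_two[OF c a] A_def .
qed

section \<open>Coaddition with a fixed point as a linear-fractional map\<close>

text \<open>The map \<open>x \<mapsto> C \<boxplus> (C \<oplus> x)\<close> in coordinates.\<close>

definition chord_map :: "real \<Rightarrow> 'a::real_inner \<Rightarrow> 'a \<Rightarrow> 'a" where
  "chord_map c C x =
     ((2 + 2 * ball_inner c C x) / (1 + ball_inner c C C + 2 * ball_inner c C x)) *\<^sub>R C
     + ((1 - ball_inner c C C) / (1 + ball_inner c C C + 2 * ball_inner c C x)) *\<^sub>R x"

lemma chord_map_denom_bound:
  assumes c: "c > 0" and C: "norm C < c" and x: "norm x \<le> c"
  shows "2 * \<bar>ball_inner c C x\<bar> < 1 + ball_inner c C C"
proof -
  define r where "r = norm C / c"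
  have r: "r < 1"
    using c C by (simp add: r_def divide_less_eq)
  have "\<bar>C \<bullet> x\<bar> \<le> norm C * c"
    using Cauchy_Schwarz_ineq2[of C x] x by (meson mult_left_mono norm_ge_zero order_trans)
  then have "\<bar>C \<bullet> x\<bar> / c^2 \<le> norm C * c / c^2"
    by (simp add: divide_right_mono)
  then have "\<bar>ball_inner c C x\<bar> \<le> r"
    using c by (simp add: ball_inner_def abs_div r_def power2_eq_square)
  moreover have "ball_inner c C C = r^2"
    by (simp add: ball_inner_self r_def)
  moreover have "(1 - r)^2 > 0"
    using r by simp
  ultimately show ?thesis
    by (simp add: power2_eq_square algebra_simps)
qed

lemma chord_map_denom_pos:
  assumes "c > 0" and "norm C < c" and "norm x \<le> c"
  shows "1 + ball_inner c C C + 2 * ball_inner c C x > 0"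
  using chord_map_denom_bound[OF assms] by arith

lemma mobius_add_boundary_eq_chord_map:
  assumes "c > 0" and "norm x = c"
  shows "mobius_add c C x = chord_map c C x"
proof -
  have c0: "c \<noteq> 0" and X: "ball_inner c x x = 1"
    using assms by (simp_all add: ball_inner_self)
  show ?thesis
    unfolding mobius_add_eq[OF c0] chord_map_def mobius_denom_def X
    by (intro arg_cong2[where f="(+)"] arg_cong2[where f=scaleR]) (simp_all add: algebra_simps)
qed

lemma norm_mobius_add_boundary:
  assumes c: "c > 0" and C: "norm C < c" and x: "norm x = c"
  shows "norm (mobius_add c C x) = c"
proof -
  have "mobius_denom c C x \<noteq> 0"
    using mobius_denom_pos[OF c C, of x] x by simp
  moreover have "ball_inner c x x = 1"
    using c x by (simp add: ball_inner_self)
  ultimately have "(norm (mobius_add c C x) / c)^2 = 1^2"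
    using ball_inner_mobius_add[of c C x] c by (simp add: ball_inner_self)
  then have "norm (mobius_add c C x) / c = 1"
    using c by (subst (asm) power2_eq_iff_nonneg) auto
  then show ?thesis
    using c by simp
qed

lemma coadd_add_coeffs:
  fixes A X Q d B :: real
  assumes dd: "d = 1 + 2*Q + A*X" and dnz: "d \<noteq> 0" and A1: "1 - A \<noteq> 0"
    and B: "B = 1 - (1-A)*(1-X)/d" and q: "1 + A + 2*Q \<noteq> 0"
  shows "(1-B)/(1-A*B) + (1-A)/(1-A*B)*((1+2*Q+X)/d) = (2+2*Q)/(1+A+2*Q)"
    and "(1-A)/(1-A*B)*((1-A)/d) = (1-A)/(1+A+2*Q)"
proof -
  define z where "z = 1 + A + 2*Q"
  have zn: "z \<noteq> 0" using q z_def by simp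
  have n: "1 - A*B = (1-A)*z/d"
    using dnz by (simp add: B z_def field_simps; use dd in algebra)
  have m: "1 - B = (1-A)*(1-X)/d"
    by (simp add: B)
  have r1: "(1-B)/(1-A*B) = (1-X)/z"
    unfolding n m using A1 dnz zn by (simp add: field_simps)
  have r2: "(1-A)/(1-A*B) = d/z"
    unfolding n using A1 dnz zn by (simp add: field_simps)
  show "(1-B)/(1-A*B) + (1-A)/(1-A*B)*((1+2*Q+X)/d) = (2+2*Q)/(1+A+2*Q)"
    unfolding r1 r2 z_def[symmetric] using dnz zn by (simp add: field_simps; use z_def in algebra)
  show "(1-A)/(1-A*B)*((1-A)/d) = (1-A)/(1+A+2*Q)"
    unfolding r2 z_def[symmetric] using dnz zn by (simp add: field_simps)
qed

lemma mobius_coadd_add_eq_chord_map: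
  assumes c: "c > 0" and C: "norm C < c" and x: "norm x < c"
  shows "mobius_coadd c C (mobius_add c C x) = chord_map c C x"
proof -
  have c0: "c \<noteq> 0" using c by simp
  define A X Q where "A = ball_inner c C C" and "X = ball_inner c x x" and "Q = ball_inner c C x"
  define d where "d = mobius_denom c C x"
  have dd: "d = 1 + 2*Q + A*X"
    unfolding d_def mobius_denom_def A_def X_def Q_def ..
  have d0: "d \<noteq> 0"
    unfolding d_def using mobius_denom_pos[OF c C, of x] x by simp
  have A1: "1 - A \<noteq> 0"
    using ball_inner_self_less_1[OF c C] by (simp add: A_def)
  have q: "1 + A + 2*Q \<noteq> 0"
    using chord_map_denom_pos[OF c C, of x] x by (simp add: A_def Q_def)
  define b where "b = mobius_add c C x"
  have bn: "norm b < c"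
    unfolding b_def by (rule norm_mobius_add_less[OF c C x])
  have B: "ball_inner c b b = 1 - (1-A)*(1-X)/d"
    unfolding b_def d_def A_def X_def by (rule ball_inner_mobius_add[OF c0]) (use d0 d_def in simp)
  have b: "b = ((1 + 2*Q + X)/d) *\<^sub>R C + ((1-A)/d) *\<^sub>R x"
    unfolding b_def mobius_add_eq[OF c0] d_def A_def X_def Q_def ..
  note coeffs = coadd_add_coeffs[OF dd d0 A1 B q]
  have "mobius_coadd c C b
    = ((1 - ball_inner c b b) / (1 - A * ball_inner c b b)) *\<^sub>R C
      + ((1 - A) / (1 - A * ball_inner c b b)) *\<^sub>R b"
    unfolding A_def by (rule mobius_coadd_eq[OF c C bn])
  also have "\<dots> = ((1 - ball_inner c b b) / (1 - A * ball_inner c b b)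
        + (1 - A) / (1 - A * ball_inner c b b) * ((1 + 2*Q + X)/d)) *\<^sub>R C
      + ((1 - A) / (1 - A * ball_inner c b b) * ((1-A)/d)) *\<^sub>R x"
    unfolding b scaleR_combination_collect ..
  also have "\<dots> = chord_map c C x"
    unfolding chord_map_def A_def[symmetric] Q_def[symmetric] coeffs ..
  finally show ?thesis
    unfolding b_def .
qed

lemma coadd_double_coeffs:
  fixes A V Q d DD :: real
  assumes dd: "d = 1 + 2*Q + A*V" and dnz: "d \<noteq> 0" and V1: "1 + V \<noteq> 0"
    and DD: "DD = 1 - (1-A)*(1-V)/d"
    and q: "1 + A + 2*(2/(1+V)*Q) \<noteq> 0"
  shows "2/(1+DD) * ((1+2*Q+V)/d) = (2 + 2*(2/(1+V)*Q))/(1 + A + 2*(2/(1+V)*Q))"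
    and "2/(1+DD) * ((1-A)/d) = (1-A)/(1 + A + 2*(2/(1+V)*Q)) * (2/(1+V))"
proof -
  define z w where "z = (1+A)*(1+V) + 4*Q" and "w = 1 + V"
  have wn: "w \<noteq> 0" using V1 w_def by simp
  have n: "1 + DD = z/d"
    using dnz by (simp add: DD z_def field_simps; use dd in algebra)
  have q': "1 + A + 2*(2/(1+V)*Q) = z/w"
    unfolding w_def[symmetric] using wn by (simp add: field_simps; use z_def w_def in algebra)
  have zn: "z \<noteq> 0" using q q' by auto
  have e: "2/(1+DD) = 2*d/z" unfolding n using dnz by simp
  have f: "2 + 2*(2/(1+V)*Q) = (2*w + 4*Q)/w"
    unfolding w_def[symmetric] using wn by (simp add: field_simps)
  show "2/(1+DD) * ((1+2*Q+V)/d) = (2 + 2*(2/(1+V)*Q))/(1 + A + 2*(2/(1+V)*Q))"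
    unfolding e q' f using dnz zn wn by (simp add: field_simps; use w_def in algebra)
  show "2/(1+DD) * ((1-A)/d) = (1-A)/(1 + A + 2*(2/(1+V)*Q)) * (2/(1+V))"
    unfolding e q' unfolding w_def[symmetric] using dnz zn wn by (simp add: field_simps)
qed

lemma mobius_coadd_double:
  assumes c: "c > 0" and C: "norm C < c" and v: "norm v < c"
  shows "mobius_coadd c (mobius_add c C v) (mobius_add c C v)
    = mobius_coadd c C (mobius_add c C (mobius_smult c 2 v))"
proof -
  have c0: "c \<noteq> 0" using c by simp
  define A V Q where "A = ball_inner c C C" and "V = ball_inner c v v" and "Q = ball_inner c C v"
  define d where "d = mobius_denom c C v"
  have dd: "d = 1 + 2*Q + A*V"
    unfolding d_def mobius_denom_def A_def V_def Q_def ..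
  have d0: "d \<noteq> 0"
    unfolding d_def using mobius_denom_pos[OF c C, of v] v by simp
  have V0: "1 + V \<noteq> 0"
    using ball_inner_self_nonneg[of c v] by (simp add: V_def)
  have two_v: "mobius_smult c 2 v = (2 / (1 + V)) *\<^sub>R v"
    unfolding V_def by (rule mobius_smult_two[OF c v])
  have two_v_norm: "norm (mobius_smult c 2 v) < c"
    by (rule norm_mobius_smult_less[OF c])
  have q: "1 + A + 2*(2/(1+V)*Q) \<noteq> 0"
    using chord_map_denom_pos[OF c C less_imp_le[OF two_v_norm[unfolded two_v]]]
    unfolding ball_inner_scaleR A_def Q_def by simp
  define D where "D = mobius_add c C v"
  have Dn: "norm D < c"
    unfolding D_def by (rule norm_mobius_add_less[OF c C v])
  have DD: "ball_inner c D D = 1 - (1-A)*(1-V)/d"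
    unfolding D_def d_def A_def V_def by (rule ball_inner_mobius_add[OF c0]) (use d0 d_def in simp)
  have D: "D = ((1 + 2*Q + V)/d) *\<^sub>R C + ((1-A)/d) *\<^sub>R v"
    unfolding D_def mobius_add_eq[OF c0] d_def A_def V_def Q_def ..
  note coeffs = coadd_double_coeffs[OF dd d0 V0 DD q]
  have "mobius_coadd c D D = (2 / (1 + ball_inner c D D)) *\<^sub>R D"
    unfolding mobius_coadd_self[OF c Dn] by (rule mobius_smult_two[OF c Dn])
  also have "\<dots> = (2 / (1 + ball_inner c D D) * ((1 + 2*Q + V)/d)) *\<^sub>R C
      + (2 / (1 + ball_inner c D D) * ((1-A)/d)) *\<^sub>R v"
    unfolding D by (simp add: scaleR_add_right)
  also have "\<dots> = chord_map c C ((2 / (1 + V)) *\<^sub>R v)"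
    unfolding coeffs chord_map_def ball_inner_scaleR A_def[symmetric] Q_def[symmetric]
    by (simp add: scaleR_scaleR)
  also have "\<dots> = mobius_coadd c C (mobius_add c C (mobius_smult c 2 v))"
    unfolding two_v[symmetric] by (rule mobius_coadd_add_eq_chord_map[OF c C two_v_norm, symmetric])
  finally show ?thesis
    unfolding D_def .
qed

section \<open>Linear-fractional parametrisations of segments\<close>

definition linear_fractional_weight :: "real \<Rightarrow> real \<Rightarrow> real \<Rightarrow> real" where
  "linear_fractional_weight p q s = (s + 1) * (p + q) / (2 * (p + s*q))"

lemma linear_fractional_convex_combination:
  fixes a b :: "'a::real_vector"
  assumes pq: "\<bar>q\<bar> < p" and s: "\<bar>s\<bar> \<le> 1"
  defines "f \<equiv> \<lambda>s. inverse (p + s*q) *\<^sub>R (a + s *\<^sub>R b)"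
    and "w \<equiv> linear_fractional_weight p q s"
  shows "f s = (1 - w) *\<^sub>R f (-1) + w *\<^sub>R f 1"
proof -
  define X where "X = p + s*q"
  have "\<bar>s*q\<bar> \<le> \<bar>q\<bar>"
    using s by (simp add: abs_mult mult_left_le_one_le)
  then have pos: "p + q > 0" "p - q > 0" "X > 0"
    using pq unfolding X_def by linarith+
  have "1 - w = (1 - s) * (p - q) / (2 * X)"
    using pos by (simp add: w_def linear_fractional_weight_def X_def field_simps; algebra)
  then have w1: "(1 - w) / (p - q) = (1 - s) / (2 * X)"
    using pos by simp
  have w2: "w / (p + q) = (1 + s) / (2 * X)"
    using pos by (simp add: w_def linear_fractional_weight_def X_def)
  have "(1 - w) *\<^sub>R f (-1) + w *\<^sub>R f 1
      = ((1 - w) / (p - q) + w / (p + q)) *\<^sub>R a + (w / (p + q) - (1 - w) / (p - q)) *\<^sub>R b"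
    by (simp add: f_def divide_inverse algebra_simps)
  also have "\<dots> = inverse X *\<^sub>R a + (s / X) *\<^sub>R b"
    unfolding w1 w2 using pos
    by (intro arg_cong2[where f="(+)"] arg_cong2[where f=scaleR]) (simp_all add: field_simps)
  finally show ?thesis
    by (simp add: f_def X_def divide_inverse scaleR_add_right)
qed

lemma linear_fractional_weight_bounds:
  assumes pq: "\<bar>q\<bar> < p" and s: "\<bar>s\<bar> < 1"
  shows "0 < linear_fractional_weight p q s" and "linear_fractional_weight p q s < 1"
proof -
  have "\<bar>s*q\<bar> \<le> \<bar>q\<bar>"
    using s by (simp add: abs_mult mult_left_le_one_le)
  then have pos: "p + q > 0" "p - q > 0" "p + s*q > 0"
    using pq by linarith+
  show "0 < linear_fractional_weight p q s"
    unfolding linear_fractional_weight_def using pos s by simp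
  have "2 * (p + s*q) - (s + 1) * (p + q) = (1 - s) * (p - q)"
    by (simp add: algebra_simps)
  moreover have "(1 - s) * (p - q) > 0"
    using pos s by simp
  ultimately show "linear_fractional_weight p q s < 1"
    unfolding linear_fractional_weight_def using pos by simp
qed

lemma linear_fractional_weight_surj:
  assumes pq: "\<bar>q\<bar> < p" and u: "0 < u" "u < 1"
  obtains s where "\<bar>s\<bar> < 1" and "linear_fractional_weight p q s = u"
proof
  have pos: "p + q > 0" "p - q > 0"
    using pq by linarith+
  define den where "den = (1 - u) * (p + q) + u * (p - q)"
  have den: "den > 0"
    unfolding den_def using pos u by (simp add: add_pos_pos)
  define s where "s = (u * (p - q) - (1 - u) * (p + q)) / den"
  have "\<bar>u * (p - q) - (1 - u) * (p + q)\<bar> < den"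
    unfolding den_def using pos u by (simp add: abs_less_iff add_pos_pos)
  then show "\<bar>s\<bar> < 1"
    unfolding s_def using den by (simp add: abs_div)
  have denom: "p + s*q = (p + q) * (p - q) / den"
    unfolding s_def using den by (simp add: field_simps; simp add: den_def algebra_simps)
  have numer: "s + 1 = 2 * u * (p - q) / den"
    unfolding s_def using den by (simp add: field_simps; simp add: den_def algebra_simps)
  show "linear_fractional_weight p q s = u"
    unfolding linear_fractional_weight_def denom numer using den pos by simp
qed

lemma linear_fractional_image_open_segment:
  fixes a b :: "'a::real_vector"
  assumes pq: "\<bar>q\<bar> < p"
  defines "f \<equiv> \<lambda>s. inverse (p + s*q) *\<^sub>R (a + s *\<^sub>R b)"
  assumes ends: "f (-1) \<noteq> f 1"
  shows "f ` {-1<..<1} = open_segment (f (-1)) (f 1)"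
proof
  show "f ` {-1<..<1} \<subseteq> open_segment (f (-1)) (f 1)"
  proof
    fix x assume "x \<in> f ` {-1<..<1}"
    then obtain s where s: "\<bar>s\<bar> < 1" and x: "x = f s"
      by (auto simp: abs_less_iff)
    show "x \<in> open_segment (f (-1)) (f 1)"
      unfolding in_segment x f_def
      using ends linear_fractional_weight_bounds[OF pq s]
        linear_fractional_convex_combination[OF pq less_imp_le[OF s], where a=a and b=b]
      by (auto simp: f_def)
  qed
  show "open_segment (f (-1)) (f 1) \<subseteq> f ` {-1<..<1}"
  proof
    fix x assume "x \<in> open_segment (f (-1)) (f 1)"
    then obtain u where u: "0 < u" "u < 1" and x: "x = (1 - u) *\<^sub>R f (-1) + u *\<^sub>R f 1"
      by (auto simp: in_segment)
    obtain s where s: "\<bar>s\<bar> < 1" and w: "linear_fractional_weight p q s = u"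
      using linear_fractional_weight_surj[OF pq u] .
    have "x = f s"
      unfolding x w[symmetric] f_def
      using linear_fractional_convex_combination[OF pq less_imp_le[OF s], where a=a and b=b] by simp
    then show "x \<in> f ` {-1<..<1}"
      using s by (auto simp: abs_less_iff)
  qed
qed

lemma sphere_line_inside_eq_open_segment:
  fixes E1 E2 :: "'a::real_inner"
  assumes E1: "norm E1 = r" and E2: "norm E2 = r" and ne: "E1 \<noteq> E2"
  shows "{x. norm x < r \<and> x \<in> affine hull {E1, E2}} = open_segment E1 E2"
proof -
  have r: "r \<ge> 0"
    using E1 by auto
  have EE: "E1 \<bullet> E1 = r^2" "E2 \<bullet> E2 = r^2"
    using E1 E2 by (simp_all flip: power2_norm_eq_inner)
  have sq: "(norm ((1 - u) *\<^sub>R E1 + u *\<^sub>R E2))^2 = r^2 - u * (1 - u) * (norm (E1 - E2))^2" for u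
    using EE unfolding power2_norm_eq_inner
    by (simp add: inner_add_left inner_add_right inner_diff_left inner_diff_right inner_commute
        algebra_simps power2_eq_square)
  have "norm ((1 - u) *\<^sub>R E1 + u *\<^sub>R E2) < r \<longleftrightarrow> 0 < u \<and> u < 1" for u
  proof -
    have "norm ((1 - u) *\<^sub>R E1 + u *\<^sub>R E2) < r \<longleftrightarrow> (norm ((1 - u) *\<^sub>R E1 + u *\<^sub>R E2))^2 < r^2"
      using r by (metis power_mono_iff norm_ge_zero not_le zero_less_numeral)
    also have "\<dots> \<longleftrightarrow> u * (1 - u) * (norm (E1 - E2))^2 > 0"
      unfolding sq by simp
    also have "\<dots> \<longleftrightarrow> 0 < u \<and> u < 1"
      using ne by (auto simp: zero_less_mult_iff)
    finally show ?thesis .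
  qed
  moreover have "x \<in> affine hull {E1, E2} \<longleftrightarrow> (\<exists>u. x = (1 - u) *\<^sub>R E1 + u *\<^sub>R E2)" for x
  proof
    assume "x \<in> affine hull {E1, E2}"
    then obtain u v where "x = u *\<^sub>R E1 + v *\<^sub>R E2" and "u + v = 1"
      by (auto simp: affine_hull_2)
    then show "\<exists>u. x = (1 - u) *\<^sub>R E1 + u *\<^sub>R E2"
      by (metis add_diff_cancel_right')
  next
    assume "\<exists>u. x = (1 - u) *\<^sub>R E1 + u *\<^sub>R E2"
    then show "x \<in> affine hull {E1, E2}"
      unfolding affine_hull_2 by force
  qed
  ultimately show ?thesis
    using ne by (auto simp: in_segment)
qed

section \<open>The supporting chord\<close>

lemma chord_map_scaleR:
  "chord_map c C (s *\<^sub>R e) = inverse ((1 + ball_inner c C C) + s * (2 * ball_inner c C e)) *\<^sub>R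
     (2 *\<^sub>R C + s *\<^sub>R ((2 * ball_inner c C e) *\<^sub>R C + (1 - ball_inner c C C) *\<^sub>R e))"
  unfolding chord_map_def
  by (simp add: divide_inverse scaleR_add_right algebra_simps)

lemma supporting_chord_eq_chord_map_image:
  assumes c: "c > 0" and C: "norm C < c" and e: "norm e = c"
  shows "supporting_chord c (mobius_add c C e) (mobius_add c C (-e))
    = (\<lambda>s. chord_map c C (s *\<^sub>R e)) ` {-1<..<1}"
proof -
  define p q a b where "p = 1 + ball_inner c C C" and "q = 2 * ball_inner c C e"
    and "a = 2 *\<^sub>R C" and "b = q *\<^sub>R C + (1 - ball_inner c C C) *\<^sub>R e"
  define f where "f = (\<lambda>s. inverse (p + s*q) *\<^sub>R (a + s *\<^sub>R b))"
  have f: "(\<lambda>s. chord_map c C (s *\<^sub>R e)) = f"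
    unfolding f_def p_def q_def a_def b_def chord_map_scaleR ..
  have pq: "\<bar>q\<bar> < p"
    using chord_map_denom_bound[OF c C, of e] e by (simp add: p_def q_def abs_mult)
  have E1: "mobius_add c C e = f 1"
    using mobius_add_boundary_eq_chord_map[OF c e] fun_cong[OF f, of 1] by simp
  have E2: "mobius_add c C (-e) = f (-1)"
    using mobius_add_boundary_eq_chord_map[OF c, of "-e"] e fun_cong[OF f, of "-1"] by simp
  have n1: "norm (f 1) = c" and n2: "norm (f (-1)) = c"
    using norm_mobius_add_boundary[OF c C, of e] norm_mobius_add_boundary[OF c C, of "-e"] e
    unfolding E1 E2 by simp_all
  have ends: "f (-1) \<noteq> f 1"
  proof
    assume eq: "f (-1) = f 1"
    have "f 0 = chord_map c C 0"
      using fun_cong[OF f, of 0] by simp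
    also have "\<dots> = mobius_smult c 2 C"
      using mobius_coadd_add_eq_chord_map[OF c C, of 0] mobius_coadd_self[OF c C] c by simp
    finally have "norm (f 0) < c"
      using norm_mobius_smult_less[OF c] by simp
    moreover have "f 0 = (1 - linear_fractional_weight p q 0) *\<^sub>R f (-1)
        + linear_fractional_weight p q 0 *\<^sub>R f 1"
      unfolding f_def by (rule linear_fractional_convex_combination[OF pq]) simp
    then have "f 0 = f 1"
      unfolding eq by (simp flip: scaleR_add_left)
    ultimately show False
      using n1 by simp
  qed
  have "supporting_chord c (f 1) (f (-1)) = open_segment (f (-1)) (f 1)"
    using sphere_line_inside_eq_open_segment[OF n1 n2 ends[symmetric]]
    by (simp add: supporting_chord_def open_segment_commute)
  also have "\<dots> = f ` {-1<..<1}"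
    using ends unfolding f_def by (rule linear_fractional_image_open_segment[OF pq, symmetric])
  finally show ?thesis
    unfolding E1 E2 f .
qed

section \<open>The gyroline\<close>

lemma mobius_smult_one:
  assumes c: "c > 0" and v: "norm v < c"
  shows "mobius_smult c 1 v = v"
proof (cases "v = 0")
  case False
  have "tanh (artanh (norm v / c)) = norm v / c"
    using c v by (simp add: tanh_artanh_real divide_less_eq)
  then show ?thesis
    using False c by (simp add: mobius_smult_def)
qed (simp add: mobius_smult_def)

lemma gyroline_zero: "gyroline c C D 0 = C"
  by (simp add: gyroline_def mobius_smult_def)

lemma gyroline_one:
  assumes c: "c > 0" and C: "norm C < c" and D: "norm D < c"
  shows "gyroline c C D 1 = D"
proof -
  have "norm (mobius_add c (-C) D) < c"
    using norm_mobius_add_less[OF c _ D] C by simp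
  then have "mobius_smult c 1 (mobius_add c (-C) D) = mobius_add c (-C) D"
    by (rule mobius_smult_one[OF c])
  then show ?thesis
    by (simp add: gyroline_def mobius_neg_def mobius_left_cancel[OF c C D])
qed

lemma gyroline_tanh_param:
  assumes c: "c > 0" and C: "norm C < c" and D: "norm D < c" and CD: "C \<noteq> D"
  obtains e K where "norm e = c" and "K > 0"
    and "gyroline c C D = (\<lambda>t. mobius_add c C (tanh (K * t) *\<^sub>R e))"
proof
  define v where "v = mobius_add c (-C) D"
  have "norm v < c"
    unfolding v_def using norm_mobius_add_less[OF c _ D] C by simp
  moreover have v0: "v \<noteq> 0"
    using mobius_left_cancel[OF c C D] CD by (auto simp: v_def)
  ultimately have \<rho>: "0 < norm v / c" "norm v / c < 1"
    using c by (simp_all add: divide_less_eq)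
  define e K where "e = (c / norm v) *\<^sub>R v" and "K = artanh (norm v / c)"
  show "norm e = c"
    using c v0 by (simp add: e_def)
  have "tanh K > 0"
    using \<rho> by (simp add: K_def tanh_artanh_real)
  then show "K > 0"
    by simp
  show "gyroline c C D = (\<lambda>t. mobius_add c C (tanh (K * t) *\<^sub>R e))"
    using v0 by (simp add: fun_eq_iff gyroline_def mobius_neg_def mobius_smult_def v_def[symmetric]
        e_def K_def mult.commute)
qed

lemma mobius_coadd_self_eq_coadd_gyroline_two:
  assumes c: "c > 0" and C: "norm C < c" and D: "norm D < c"
  shows "mobius_coadd c D D = mobius_coadd c C (gyroline c C D 2)"
proof -
  have "norm (mobius_add c (-C) D) < c"
    using norm_mobius_add_less[OF c _ D] C by simp
  from mobius_coadd_double[OF c C this] show ?thesis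
    unfolding mobius_left_cancel[OF c C D] by (simp add: gyroline_def mobius_neg_def)
qed

lemma isCont_mobius_add_right:
  assumes c: "c \<noteq> 0" and d: "mobius_denom c u v \<noteq> 0"
  shows "isCont (mobius_add c u) v"
proof -
  have "mobius_add c u = (\<lambda>v. ((1 + 2 * ball_inner c u v + ball_inner c v v) / mobius_denom c u v) *\<^sub>R u
      + ((1 - ball_inner c u u) / mobius_denom c u v) *\<^sub>R v)"
    by (rule ext) (rule mobius_add_eq[OF c])
  then show ?thesis
    using d unfolding mobius_denom_def ball_inner_def
    by (simp only:) (intro continuous_intros; use c in simp)
qed

lemma tendsto_mobius_add_tanh:
  assumes c: "c > 0" and C: "norm C < c" and e: "norm e = c" and K: "K > 0"
  shows "((\<lambda>t. mobius_add c C (tanh (K * t) *\<^sub>R e)) \<longlongrightarrow> mobius_add c C e) at_top"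
    and "((\<lambda>t. mobius_add c C (tanh (K * t) *\<^sub>R e)) \<longlongrightarrow> mobius_add c C (-e)) at_bot"
proof -
  have cont: "isCont (mobius_add c C) x" if "norm x = c" for x
    using isCont_mobius_add_right[of c C x] mobius_denom_pos[OF c C, of x] c that by simp
  have "((\<lambda>t. tanh (K * t)) \<longlongrightarrow> 1) at_top"
    by (rule filterlim_compose[OF tanh_real_at_top
          filterlim_tendsto_pos_mult_at_top[OF tendsto_const K filterlim_ident]])
  then have "((\<lambda>t. tanh (K * t) *\<^sub>R e) \<longlongrightarrow> e) at_top"
    using tendsto_scaleR[OF _ tendsto_const] by fastforce
  then show "((\<lambda>t. mobius_add c C (tanh (K * t) *\<^sub>R e)) \<longlongrightarrow> mobius_add c C e) at_top"
    by (rule isCont_tendsto_compose[OF cont[OF e]])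
  have "((\<lambda>t. tanh (K * t)) \<longlongrightarrow> -1) at_bot"
    by (rule filterlim_compose[OF tanh_real_at_bot
          filterlim_tendsto_pos_mult_at_bot[OF tendsto_const K filterlim_ident]])
  then have "((\<lambda>t. tanh (K * t) *\<^sub>R e) \<longlongrightarrow> -e) at_bot"
    using tendsto_scaleR[OF _ tendsto_const] by fastforce
  moreover have "norm (-e) = c"
    using e by simp
  ultimately show "((\<lambda>t. mobius_add c C (tanh (K * t) *\<^sub>R e)) \<longlongrightarrow> mobius_add c C (-e)) at_bot"
    using isCont_tendsto_compose cont by blast
qed

lemma range_tanh_scaled:
  assumes "K > (0::real)"
  shows "range (\<lambda>t. tanh (K * t)) = {-1<..<1}"
proof
  show "range (\<lambda>t. tanh (K * t)) \<subseteq> {-1<..<1}"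
    using tanh_real_bounds by auto
  show "{-1<..<1} \<subseteq> range (\<lambda>t. tanh (K * t))"
  proof
    fix s :: real assume "s \<in> {-1<..<1}"
    then have "tanh (K * (artanh s / K)) = s"
      using assms by (simp add: tanh_artanh_real abs_less_iff)
    then show "s \<in> range (\<lambda>t. tanh (K * t))"
      by (metis rangeI)
  qed
qed

lemma range_coadd_tanh_line:
  assumes c: "c > 0" and C: "norm C < c" and e: "norm e = c" and K: "K > 0"
  shows "range (\<lambda>t. mobius_coadd c C (mobius_add c C (tanh (K * t) *\<^sub>R e)))
    = supporting_chord c (mobius_add c C e) (mobius_add c C (-e))"
proof -
  have "norm (tanh (K * t) *\<^sub>R e) < c" for t
    using tanh_real_bounds[of "K * t"] c e by (simp add: abs_less_iff)
  then have "range (\<lambda>t. mobius_coadd c C (mobius_add c C (tanh (K * t) *\<^sub>R e)))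
      = (\<lambda>s. chord_map c C (s *\<^sub>R e)) ` range (\<lambda>t. tanh (K * t))"
    by (simp add: mobius_coadd_add_eq_chord_map[OF c C] image_image)
  then show ?thesis
    unfolding range_tanh_scaled[OF K] supporting_chord_eq_chord_map_image[OF c C e] .
qed

theorem theorem3:
  fixes c :: real and C D :: "real^'n"
  assumes "c > 0" and "CARD('n) \<ge> 2"
    and "norm C < c" and "norm D < c" and "C \<noteq> D"
  shows "\<exists>E1 E2.
           (gyroline c C D \<longlongrightarrow> E1) at_top \<and>
           (gyroline c C D \<longlongrightarrow> E2) at_bot \<and>
           supporting_chord c E1 E2 = range (\<lambda>t. mobius_coadd c C (gyroline c C D t)) \<and>
           mobius_coadd c C C = mobius_smult c 2 C \<and>
           mobius_coadd c D D = mobius_smult c 2 D \<and>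
           mobius_coadd c C C \<in> supporting_chord c E1 E2 \<and>
           mobius_coadd c D D \<in> supporting_chord c E1 E2 \<and>
           mobius_coadd c C D \<in> supporting_chord c E1 E2"
proof -
  note c = \<open>c > 0\<close> and C = \<open>norm C < c\<close> and D = \<open>norm D < c\<close>
  obtain e K where e: "norm e = c" and K: "K > 0"
    and L: "gyroline c C D = (\<lambda>t. mobius_add c C (tanh (K * t) *\<^sub>R e))"
    using gyroline_tanh_param[OF c C D \<open>C \<noteq> D\<close>] by blast
  define chord where "chord = range (\<lambda>t. mobius_coadd c C (gyroline c C D t))"
  have "chord = supporting_chord c (mobius_add c C e) (mobius_add c C (-e))"
    unfolding chord_def L by (rule range_coadd_tanh_line[OF c C e K])
  moreover have "mobius_coadd c C C \<in> chord" "mobius_coadd c C D \<in> chord"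
    "mobius_coadd c D D \<in> chord"
    using gyroline_zero[of c C D] gyroline_one[OF c C D]
      mobius_coadd_self_eq_coadd_gyroline_two[OF c C D]
    unfolding chord_def by (metis rangeI)+
  ultimately show ?thesis
    using tendsto_mobius_add_tanh[OF c C e K] mobius_coadd_self[OF c C] mobius_coadd_self[OF c D]
    unfolding L[symmetric] chord_def by metis
qed

end
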